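(* Let $H$ be a subgroup of a group $G$, let $W$ be a subset of a finitely generated group $F$ whose commutator subgroup $F'$ has infinite index in $F$, and let $W\ni w\mapsto g_w\in G$ be an arbitrary map. Then the number of homomorphisms $\varphi: F\to G$ such that $\varphi(w)\in Hg_wH$ for all $w\in W$ is divisible by $|H|$.
   Context: Groups need not be finite; divisibility is understood in the sense of cardinal arithmetic: an infinite cardinal is divisible by every nonzero cardinal not exceeding it. *)

theory Defs
  imports "HOL-Algebra.Algebra" "HOL-Library.Equipollence"
begin

text \<open>Cardinal divisibility: the cardinality of A is divisible by that of B,
  i.e. |A| = |B| * |C| for some cardinal |C| (cardinal multiplication = product of sets).
  A witness C can always be taken inside the element type of A.\<close>
definition card_dvd :: "'b set \<Rightarrow> 'a set \<Rightarrow> bool" where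
  "card_dvd B A \<longleftrightarrow> (\<exists>C :: 'a set. A \<approx> B \<times> C)"

definition finitely_generated_group :: "('a, 'b) monoid_scheme \<Rightarrow> bool" where
  "finitely_generated_group F \<longleftrightarrow>
     (\<exists>S. finite S \<and> S \<subseteq> carrier F \<and> generate F S = carrier F)"

text \<open>Homomorphisms F \<rightarrow> G, as functions on carrier F (extensional, so that each
  homomorphism is counted once).\<close>
definition homs :: "('a, 'c) monoid_scheme \<Rightarrow> ('b, 'd) monoid_scheme \<Rightarrow> ('a \<Rightarrow> 'b) set" where
  "homs F G = hom F G \<inter> extensional (carrier F)"

definition double_coset :: "('a, 'b) monoid_scheme \<Rightarrow> 'a set \<Rightarrow> 'a \<Rightarrow> 'a set" where
  "double_coset G H g = H <#>\<^bsub>G\<^esub> (g <#\<^bsub>G\<^esub> H)"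

end

theory Submission
  imports Defs
begin

text \<open>Since \<open>F/F'\<close> is an infinite finitely generated abelian group, it maps onto \<open>\<int>\<close>; fix such a
  map \<open>deg\<close>, an element \<open>t\<close> with \<open>deg t = 1\<close> and \<open>K = ker deg\<close>, so that \<open>F = K \<rtimes> \<langle>t\<rangle>\<close>.
  The profile of a homomorphism \<open>\<phi>\<close> is the pair \<open>(\<phi>|K, x \<mapsto> \<phi>(x)H)\<close>. Conjugation by elements
  of \<open>H\<close> acts on homomorphisms compatibly with profiles, and the condition
  \<open>\<phi>(w) \<in> H g\<^sub>w H\<close> only depends on the \<open>H\<close>-orbit of the profile of \<open>\<phi>\<close>. Two homomorphisms
  with the same profile differ exactly by replacing \<open>\<phi>(t)\<close> with \<open>\<phi>(t)q\<close> for \<open>q\<close> in the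
  stabiliser of the profile, so each fibre of the profile map is equipollent to that stabiliser.
  Hence the homomorphisms whose profile lies in one \<open>H\<close>-orbit are equipollent to \<open>H\<close>, and the
  set to be counted is a disjoint union of such classes.\<close>

no_notation (ASCII) subset_mset (infix \<open><#\<close> 50) \<comment> \<open>clashes with left cosets\<close>

lemma eqpoll_Times_if_fibres_eqpoll:
  assumes f: "f \<in> A \<rightarrow> I" and fibres: "\<And>i. i \<in> I \<Longrightarrow> {a \<in> A. f a = i} \<approx> B"
  shows "A \<approx> I \<times> B"
proof -
  have "A = (\<Union>i\<in>I. {a \<in> A. f a = i})" using f by blast
  also have "\<dots> \<approx> I \<times> B"
    by (rule Union_eqpoll_Times[OF fibres]) (auto simp: pairwise_def disjnt_def)
  finally show ?thesis .
qed

lemma card_dvdI: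
  fixes A :: "'a set" and I :: "'i set"
  assumes "A \<approx> B \<times> I"
  shows "card_dvd B A"
proof (cases "B = {}")
  case True
  then show ?thesis using assms unfolding card_dvd_def by auto
next
  case False
  then obtain b where b: "b \<in> B" by blast
  obtain f where f: "bij_betw f (B \<times> I) A" using assms eqpoll_sym unfolding eqpoll_def by blast
  define C where "C = f ` ({b} \<times> I)"
  have "I \<approx> {b} \<times> I" by (rule eqpoll_sym[OF times_singleton_eqpoll])
  also have "\<dots> \<approx> C" unfolding C_def eqpoll_def
    by (rule exI[of _ f], rule bij_betw_subset[OF f]) (use b in auto)
  finally have "B \<times> I \<approx> B \<times> C" by (rule times_eqpoll_cong[OF eqpoll_refl])
  with assms have "A \<approx> B \<times> C" by (rule eqpoll_trans)
  then show ?thesis unfolding card_dvd_def by blast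
qed

lemma (in group) inv_mult_cancel_left [simp]: "x \<in> carrier G \<Longrightarrow> y \<in> carrier G \<Longrightarrow> inv x \<otimes> (x \<otimes> y) = y"
  by (simp add: m_assoc[symmetric])

lemma (in group) mult_inv_cancel_left [simp]: "x \<in> carrier G \<Longrightarrow> y \<in> carrier G \<Longrightarrow> x \<otimes> (inv x \<otimes> y) = y"
  by (simp add: m_assoc[symmetric])

lemma (in group) int_pow_succ_left: "x \<in> carrier G \<Longrightarrow> x [^] (i + 1 :: int) = x \<otimes> x [^] i"
  using int_pow_mult[of x 1 i] by (simp add: add.commute)

lemma (in group) int_pow_pred_left: "x \<in> carrier G \<Longrightarrow> x [^] (i - 1 :: int) = inv x \<otimes> x [^] i"
  using int_pow_mult[of x "-1" i] by (simp add: int_pow_neg)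

lemma (in group) conj_int_pow_mult_commuting:
  assumes a: "a \<in> carrier G" and q: "q \<in> carrier G" and Y: "Y \<subseteq> carrier G"
    and comm: "\<And>y. y \<in> Y \<Longrightarrow> q \<otimes> y = y \<otimes> q"
    and conj_closed: "\<And>n y. y \<in> Y \<Longrightarrow> a [^] (n::int) \<otimes> y \<otimes> inv (a [^] n) \<in> Y"
    and y: "y \<in> Y"
  shows "(a \<otimes> q) [^] (n::int) \<otimes> y \<otimes> inv ((a \<otimes> q) [^] n) = a [^] n \<otimes> y \<otimes> inv (a [^] n)"
proof (induction n rule: int_induct[where k=0])
  case base
  show ?case using y Y by auto
next
  case (step1 i)
  let ?b = "a \<otimes> q" and ?z = "a [^] i \<otimes> y \<otimes> inv (a [^] i)"
  have z: "?z \<in> Y" "?z \<in> carrier G" using conj_closed[OF y] Y by auto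
  have "?b [^] (i + 1) \<otimes> y \<otimes> inv (?b [^] (i + 1)) = ?b \<otimes> (?b [^] i \<otimes> y \<otimes> inv (?b [^] i)) \<otimes> inv ?b"
    using a q y Y by (auto simp: int_pow_succ_left m_assoc inv_mult_group)
  also have "\<dots> = a \<otimes> (q \<otimes> ?z \<otimes> inv q) \<otimes> inv a"
    using a q z by (simp add: step1.IH m_assoc inv_mult_group)
  also have "q \<otimes> ?z \<otimes> inv q = ?z"
    using comm[OF z(1)] q z by (simp add: m_assoc)
  also have "a \<otimes> ?z \<otimes> inv a = a [^] (i + 1) \<otimes> y \<otimes> inv (a [^] (i + 1))"
    using a y Y by (auto simp: int_pow_succ_left m_assoc inv_mult_group)
  finally show ?case .
next
  case (step2 i)
  let ?b = "a \<otimes> q" and ?z = "a [^] (i - 1) \<otimes> y \<otimes> inv (a [^] (i - 1))"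
  have z: "?z \<in> Y" "?z \<in> carrier G" using conj_closed[OF y] Y by auto
  have "?b [^] (i - 1) \<otimes> y \<otimes> inv (?b [^] (i - 1)) = inv ?b \<otimes> (?b [^] i \<otimes> y \<otimes> inv (?b [^] i)) \<otimes> ?b"
    using a q y Y by (auto simp: int_pow_pred_left m_assoc inv_mult_group)
  also have "\<dots> = inv q \<otimes> (inv a \<otimes> (a [^] i \<otimes> y \<otimes> inv (a [^] i)) \<otimes> a) \<otimes> q"
    using a q y Y by (auto simp add: step2.IH m_assoc inv_mult_group)
  also have "inv a \<otimes> (a [^] i \<otimes> y \<otimes> inv (a [^] i)) \<otimes> a = ?z"
    using a y Y by (auto simp: int_pow_pred_left m_assoc inv_mult_group)
  also have "inv q \<otimes> ?z \<otimes> q = ?z"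
    using comm[OF z(1)] q z(2) by (metis inv_closed l_inv l_one m_assoc)
  finally show ?case .
qed

lemma (in group) int_pow_mult_l_coset:
  assumes a: "a \<in> carrier G" and q: "q \<in> carrier G" and H: "H \<subseteq> carrier G"
    and fixes_cosets: "\<And>n::int. q <# (a [^] n <# H) = a [^] n <# H"
  shows "(a \<otimes> q) [^] (n::int) <# H = a [^] n <# H"
proof (induction n rule: int_induct[where k=0])
  case base
  show ?case using H by (simp add: lcos_mult_one)
next
  case (step1 i)
  have "(a \<otimes> q) [^] (i + 1) <# H = a <# (q <# ((a \<otimes> q) [^] i <# H))"
    using a q H by (simp add: int_pow_succ_left lcos_m_assoc l_coset_subset_G m_assoc)
  also have "\<dots> = a [^] (i + 1) <# H"
    using a H by (simp add: step1.IH fixes_cosets int_pow_succ_left lcos_m_assoc)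
  finally show ?case .
next
  case (step2 i)
  have inv_fixes: "inv q <# (a [^] n <# H) = a [^] n <# H" for n :: int
  proof -
    have "inv q <# (a [^] n <# H) = inv q <# (q <# (a [^] n <# H))" by (simp only: fixes_cosets)
    also have "\<dots> = a [^] n <# H"
      using a q H by (simp add: lcos_m_assoc l_coset_subset_G m_assoc[symmetric])
    finally show ?thesis .
  qed
  have "(a \<otimes> q) [^] (i - 1) <# H = inv q <# (inv a <# ((a \<otimes> q) [^] i <# H))"
    using a q H by (simp add: int_pow_pred_left lcos_m_assoc l_coset_subset_G m_assoc inv_mult_group)
  also have "\<dots> = inv q <# (a [^] (i - 1) <# H)"
    using a H by (simp add: step2.IH int_pow_pred_left lcos_m_assoc)
  also have "\<dots> = a [^] (i - 1) <# H" by (rule inv_fixes)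
  finally show ?case .
qed

lemma (in group) conj_l_coset:
  assumes H: "subgroup H G" and h: "h \<in> H" and y: "y \<in> carrier G"
  shows "h \<otimes> y \<otimes> inv h <# H = h <# (y <# H)"
proof -
  have hc: "h \<in> carrier G" using H h by (rule subgroup.mem_carrier)
  have "h \<otimes> y \<otimes> inv h <# H = (h \<otimes> y) <# (inv h <# H)"
    using hc y subgroup.subset[OF H] by (simp add: lcos_m_assoc)
  also have "inv h <# H = H" using coset_join3[OF inv_closed[OF hc] H subgroup.m_inv_closed[OF H h]] .
  finally show ?thesis using hc y subgroup.subset[OF H] by (simp add: lcos_m_assoc)
qed

lemma (in group) double_coset_mult_closed:
  assumes H: "subgroup H G" and a: "a \<in> carrier G" and h: "h \<in> H" "h' \<in> H"
    and x: "x \<in> double_coset G H a"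
  shows "h \<otimes> (x \<otimes> h') \<in> double_coset G H a"
proof -
  obtain h1 h2 where h12: "h1 \<in> H" "h2 \<in> H" and x_eq: "x = h1 \<otimes> (a \<otimes> h2)"
    using x unfolding double_coset_def set_mult_def l_coset_def by blast
  have c: "h \<in> carrier G" "h' \<in> carrier G" "h1 \<in> carrier G" "h2 \<in> carrier G"
    using H h h12 by (auto intro: subgroup.mem_carrier)
  have "h \<otimes> (x \<otimes> h') = (h \<otimes> h1) \<otimes> (a \<otimes> (h2 \<otimes> h'))"
    unfolding x_eq using a c by (simp add: m_assoc)
  moreover have "h \<otimes> h1 \<in> H" "h2 \<otimes> h' \<in> H" using H h h12 by (auto intro: subgroup.m_closed)
  ultimately show ?thesis unfolding double_coset_def set_mult_def l_coset_def by blast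
qed

lemma (in group) conj_eq_iff_commute:
  "u \<in> carrier G \<Longrightarrow> y \<in> carrier G \<Longrightarrow> u \<otimes> y \<otimes> inv u = y \<longleftrightarrow> u \<otimes> y = y \<otimes> u"
  using inv_solve_right[of y "u \<otimes> y" u] by auto

section \<open>Infinite finitely generated abelian groups map onto \<open>\<int>\<close>\<close>

lemma (in comm_group) generate_insert:
  assumes s: "s \<in> carrier G" and S: "S \<subseteq> carrier G"
  shows "generate G (insert s S) = generate G S <#> generate G {s}"
proof
  have sub: "subgroup (generate G S <#> generate G {s}) G"
    using mult_subgroups generate_is_subgroup s S by auto
  have "insert s S \<subseteq> generate G S <#> generate G {s}"
  proof
    fix x assume "x \<in> insert s S"
    then have "x = \<one> \<otimes> s \<and> \<one> \<in> generate G S \<and> s \<in> generate G {s}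
             \<or> x = x \<otimes> \<one> \<and> x \<in> generate G S \<and> \<one> \<in> generate G {s}"
      using s S by (auto intro: generate.intros)
    then show "x \<in> generate G S <#> generate G {s}" unfolding set_mult_def by blast
  qed
  then show "generate G (insert s S) \<subseteq> generate G S <#> generate G {s}"
    using generate_subgroup_incl[OF _ sub] by blast
next
  have sub: "subgroup (generate G (insert s S)) G" using generate_is_subgroup s S by auto
  have "generate G S \<subseteq> generate G (insert s S)" "generate G {s} \<subseteq> generate G (insert s S)"
    using mono_generate[of S "insert s S"] mono_generate[of "{s}" "insert s S"] by auto
  then show "generate G S <#> generate G {s} \<subseteq> generate G (insert s S)"
    unfolding set_mult_def using subgroup.m_closed[OF sub] by blast
qed

lemma (in group) hom_to_integer_group_extension_well_defined:
  assumes s: "s \<in> carrier G" and B: "subgroup B G"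
    and f: "f \<in> hom (G\<lparr>carrier := B\<rparr>) integer_group"
    and compatible: "\<And>j::int. s [^] j \<in> B \<Longrightarrow> m * f (s [^] j) = j * c"
    and b: "b \<in> B" "b' \<in> B" and eq: "b \<otimes> s [^] k = b' \<otimes> s [^] k'"
  shows "m * f b + k * c = m * f b' + k' * c"
proof -
  have bc: "b \<in> carrier G" "b' \<in> carrier G" using b subgroup.mem_carrier[OF B] by auto
  have "b' = b \<otimes> s [^] k \<otimes> inv (s [^] k')" using eq bc s by (simp add: m_assoc)
  then have pow_eq: "s [^] (k - k') = inv b \<otimes> b'" using bc s by (simp add: int_pow_diff m_assoc)
  have inB: "inv b \<otimes> b' \<in> B" using B b by (simp add: subgroup.m_closed subgroup.m_inv_closed)
  have "f b + f (inv b \<otimes> b') = f (b \<otimes> (inv b \<otimes> b'))" using f b(1) inB by (simp add: hom_def)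
  then have "f (inv b \<otimes> b') = f b' - f b" using bc by simp
  moreover have "m * f (inv b \<otimes> b') = (k - k') * c" using compatible[of "k - k'"] pow_eq inB by simp
  ultimately have "m * f b' - m * f b = k * c - k' * c" by (simp add: right_diff_distrib left_diff_distrib)
  then show ?thesis by linarith
qed

lemma (in comm_group) hom_to_integer_group_extend:
  assumes s: "s \<in> carrier G" and B: "subgroup B G"
    and f: "f \<in> hom (G\<lparr>carrier := B\<rparr>) integer_group"
    and compatible: "\<And>j::int. s [^] j \<in> B \<Longrightarrow> m * f (s [^] j) = j * c"
  shows "\<exists>g \<in> hom (G\<lparr>carrier := B <#> generate G {s}\<rparr>) integer_group.
           \<forall>b\<in>B. \<forall>k::int. g (b \<otimes> s [^] k) = m * f b + k * c"
proof -
  have Bc: "B \<subseteq> carrier G" using B by (rule subgroup.subset)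
  have f_mult: "f (x \<otimes> y) = f x + f y" if "x \<in> B" "y \<in> B" for x y
    using f that by (simp add: hom_def)
  have mem: "x \<in> B <#> generate G {s} \<longleftrightarrow> (\<exists>b\<in>B. \<exists>k::int. x = b \<otimes> s [^] k)" for x
    by (auto simp: set_mult_def generate_pow[OF s])
  define g where "g x = (SOME v. \<exists>b\<in>B. \<exists>k::int. x = b \<otimes> s [^] k \<and> v = m * f b + k * c)" for x
  have g: "g (b \<otimes> s [^] k) = m * f b + k * c" if b: "b \<in> B" for b k
  proof -
    have "(\<exists>b'\<in>B. \<exists>k'::int. b \<otimes> s [^] k = b' \<otimes> s [^] k' \<and> v = m * f b' + k' * c)
        \<longleftrightarrow> v = m * f b + k * c" for v
    proof
      assume "\<exists>b'\<in>B. \<exists>k'::int. b \<otimes> s [^] k = b' \<otimes> s [^] k' \<and> v = m * f b' + k' * c"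
      then obtain b' k' where "b' \<in> B" "b \<otimes> s [^] k = b' \<otimes> s [^] (k'::int)" "v = m * f b' + k' * c"
        by blast
      then show "v = m * f b + k * c"
        using hom_to_integer_group_extension_well_defined[OF s B f compatible b] by simp
    qed (use b in blast)
    then show ?thesis unfolding g_def by simp
  qed
  have "g (x \<otimes> y) = g x + g y" if xy: "x \<in> B <#> generate G {s}" "y \<in> B <#> generate G {s}" for x y
  proof -
    obtain b k b' k' where b: "b \<in> B" "b' \<in> B" and x: "x = b \<otimes> s [^] (k::int)"
      and y: "y = b' \<otimes> s [^] (k'::int)"
      using xy mem by blast
    have "x \<otimes> y = (b \<otimes> b') \<otimes> s [^] (k + k')"
    proof -
      have "b \<in> carrier G" "b' \<in> carrier G" using b Bc by auto
      then show ?thesis unfolding x y using s by (simp add: int_pow_mult m_assoc m_lcomm[of "s [^] k" b'])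
    qed
    moreover have "b \<otimes> b' \<in> B" using B b by (rule subgroup.m_closed)
    ultimately show ?thesis
      unfolding x y using b g by (simp add: f_mult algebra_simps)
  qed
  then have "g \<in> hom (G\<lparr>carrier := B <#> generate G {s}\<rparr>) integer_group" by (simp add: hom_def)
  with g show ?thesis by blast
qed

lemma (in group) hom_to_integer_group_int_pow:
  assumes B: "subgroup B G" and f: "f \<in> hom (G\<lparr>carrier := B\<rparr>) integer_group" and x: "x \<in> B"
  shows "f (x [^] (n::int)) = n * f x"
proof -
  interpret f: group_hom "G\<lparr>carrier := B\<rparr>" integer_group f
    by (intro group_hom.intro group_hom_axioms.intro subgroup_imp_group[OF B] group_integer_group f)
  show ?thesis using f.hom_int_pow x by (simp add: int_pow_consistent[OF B x])
qed

lemma (in comm_group) finite_generate_insert: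
  assumes fin: "finite (generate G S)" and s: "s \<in> carrier G" and S: "S \<subseteq> carrier G"
    and m: "0 < m" "s [^] (m::int) \<in> generate G S"
  shows "finite (generate G (insert s S))"
proof -
  let ?B = "generate G S"
  have B: "subgroup ?B G" using generate_is_subgroup[OF S] .
  have "generate G (insert s S) \<subseteq> (\<lambda>(b, k). b \<otimes> s [^] k) ` (?B \<times> {0..<m})"
  proof
    fix x assume "x \<in> generate G (insert s S)"
    then obtain b k where b: "b \<in> ?B" and x: "x = b \<otimes> s [^] (k::int)"
      unfolding generate_insert[OF s S] by (auto simp: set_mult_def generate_pow[OF s])
    have bc: "b \<in> carrier G" using subgroup.mem_carrier[OF B b] .
    have "s [^] k = s [^] (m * (k div m) + k mod m)" by simp
    also have "\<dots> = (s [^] m) [^] (k div m) \<otimes> s [^] (k mod m)"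
      by (simp only: int_pow_mult[OF s] int_pow_pow[OF s])
    finally have "s [^] k = (s [^] m) [^] (k div m) \<otimes> s [^] (k mod m)" .
    then have "x = (b \<otimes> (s [^] m) [^] (k div m)) \<otimes> s [^] (k mod m)"
      unfolding x using bc s by (simp add: m_assoc)
    moreover have "b \<otimes> (s [^] m) [^] (k div m) \<in> ?B"
      using B b m(2) by (simp add: subgroup.m_closed subgroup_int_pow_closed)
    ultimately show "x \<in> (\<lambda>(b, k). b \<otimes> s [^] k) ` (?B \<times> {0..<m})"
      using m(1) by (intro image_eqI[where x="(b \<otimes> (s [^] m) [^] (k div m), k mod m)"]) auto
  qed
  moreover have "finite ((\<lambda>(b, k). b \<otimes> s [^] k) ` (?B \<times> {0..<m}))" using fin by simp
  ultimately show ?thesis by (rule finite_subset)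
qed

lemma (in comm_group) hom_to_integer_group_if_no_power:
  assumes s: "s \<in> carrier G" and S: "S \<subseteq> carrier G"
    and no_power: "\<And>m. 0 < m \<Longrightarrow> s [^] (m::int) \<notin> generate G S"
  shows "\<exists>g \<in> hom (G\<lparr>carrier := generate G (insert s S)\<rparr>) integer_group. g s = 1"
proof -
  let ?B = "generate G S"
  have B: "subgroup ?B G" using generate_is_subgroup[OF S] .
  have trivial: "j = 0" if j: "s [^] j \<in> ?B" for j :: int
  proof (rule ccontr)
    assume "j \<noteq> 0"
    then have "0 < j \<or> 0 < - j" by arith
    moreover have "s [^] (- j) \<in> ?B" using subgroup.m_inv_closed[OF B j] int_pow_neg[OF s] by simp
    ultimately show False using no_power j by blast
  qed
  have "(\<lambda>_. 0) \<in> hom (G\<lparr>carrier := ?B\<rparr>) integer_group" by (simp add: hom_def)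
  then obtain g where g: "g \<in> hom (G\<lparr>carrier := generate G (insert s S)\<rparr>) integer_group"
    and g_val: "\<forall>b\<in>?B. \<forall>k::int. g (b \<otimes> s [^] k) = 0 * 0 + k * 1"
    using hom_to_integer_group_extend[OF s B, of "\<lambda>_. 0" 0 1] trivial
    unfolding generate_insert[OF s S] by auto
  have "g (\<one> \<otimes> s [^] (1::int)) = 0 * 0 + 1 * 1" using g_val generate.one by blast
  then have "g s = 1" using s by simp
  with g show ?thesis by blast
qed

lemma (in comm_group) hom_to_integer_group_extend_nonzero:
  assumes s: "s \<in> carrier G" and S: "S \<subseteq> carrier G"
    and f: "f \<in> hom (G\<lparr>carrier := generate G S\<rparr>) integer_group"
    and x0: "x0 \<in> generate G S" "f x0 \<noteq> 0"
    and m: "0 < m" "s [^] (m::int) \<in> generate G S"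
  shows "\<exists>g \<in> hom (G\<lparr>carrier := generate G (insert s S)\<rparr>) integer_group. g x0 \<noteq> 0"
proof -
  let ?B = "generate G S"
  have B: "subgroup ?B G" using generate_is_subgroup[OF S] .
  have "m * f (s [^] j) = j * f (s [^] m)" if j: "s [^] j \<in> ?B" for j :: int
  proof -
    have "(s [^] j) [^] m = (s [^] m) [^] j" using s by (simp add: int_pow_pow mult.commute)
    then show ?thesis
      using hom_to_integer_group_int_pow[OF B f j, of m] hom_to_integer_group_int_pow[OF B f m(2), of j]
      by (simp add: mult.commute)
  qed
  then obtain g where g: "g \<in> hom (G\<lparr>carrier := generate G (insert s S)\<rparr>) integer_group"
    and g_val: "\<forall>b\<in>?B. \<forall>k::int. g (b \<otimes> s [^] k) = m * f b + k * f (s [^] m)"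
    using hom_to_integer_group_extend[OF s B f] unfolding generate_insert[OF s S] by blast
  have "g (x0 \<otimes> s [^] (0::int)) = m * f x0 + 0 * f (s [^] m)" using g_val x0(1) by blast
  then have "g x0 \<noteq> 0" using subgroup.mem_carrier[OF B x0(1)] x0(2) m(1) by simp
  with g show ?thesis by blast
qed

lemma (in comm_group) finite_or_hom_to_integer_group:
  assumes "finite S" "S \<subseteq> carrier G"
  shows "finite (generate G S) \<or>
    (\<exists>f \<in> hom (G\<lparr>carrier := generate G S\<rparr>) integer_group. \<exists>x \<in> generate G S. f x \<noteq> 0)"
  using assms
proof (induction S rule: finite_induct)
  case empty
  then show ?case by (simp add: generate_empty)
next
  case (insert s S)
  have s: "s \<in> carrier G" and S: "S \<subseteq> carrier G" using insert.prems by auto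
  have B_C: "generate G S \<subseteq> generate G (insert s S)" and s_C: "s \<in> generate G (insert s S)"
    using mono_generate[of S "insert s S"] by (auto intro: generate.incl)
  show ?case
  proof (cases "\<exists>m>0. s [^] (m::int) \<in> generate G S")
    case False
    then obtain g where "g \<in> hom (G\<lparr>carrier := generate G (insert s S)\<rparr>) integer_group" "g s = 1"
      using hom_to_integer_group_if_no_power[OF s S] by blast
    then show ?thesis using s_C by force
  next
    case True
    then obtain m :: int where m: "0 < m" "s [^] m \<in> generate G S" by blast
    from insert.IH[OF S] show ?thesis
    proof
      assume "finite (generate G S)"
      then show ?thesis using finite_generate_insert[OF _ s S m] by blast
    next
      assume "\<exists>f \<in> hom (G\<lparr>carrier := generate G S\<rparr>) integer_group. \<exists>x \<in> generate G S. f x \<noteq> 0"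
      then obtain f x0 where f: "f \<in> hom (G\<lparr>carrier := generate G S\<rparr>) integer_group"
        and x0: "x0 \<in> generate G S" "f x0 \<noteq> 0" by blast
      then obtain g where "g \<in> hom (G\<lparr>carrier := generate G (insert s S)\<rparr>) integer_group" "g x0 \<noteq> 0"
        using hom_to_integer_group_extend_nonzero[OF s S f x0 m] by blast
      then show ?thesis using x0(1) B_C by blast
    qed
  qed
qed

lemma (in group) hom_onto_integer_group_if_nonzero:
  assumes f: "f \<in> hom G integer_group" and x0: "x0 \<in> carrier G" "f x0 \<noteq> 0"
  shows "\<exists>\<pi> \<in> hom G integer_group. \<exists>t \<in> carrier G. \<pi> t = 1"
proof -
  interpret f: group_hom G integer_group f
    by (intro group_hom.intro group_hom_axioms.intro is_group group_integer_group f)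
  define P where "P n \<longleftrightarrow> 0 < n \<and> int n \<in> f ` carrier G" for n
  have "P (nat \<bar>f x0\<bar>)"
  proof (cases "0 < f x0")
    case True
    then show ?thesis unfolding P_def using x0 by force
  next
    case False
    then show ?thesis unfolding P_def using x0 f.hom_inv[OF x0(1)]
      by (auto intro!: image_eqI[where x="inv x0"])
  qed
  define d where "d = (LEAST n. P n)"
  have "P d" unfolding d_def by (rule LeastI) fact
  then have d: "0 < d" and "int d \<in> f ` carrier G" by (simp_all add: P_def)
  then obtain t where t: "t \<in> carrier G" "f t = int d" by auto
  have dvd: "int d dvd f x" if x: "x \<in> carrier G" for x
  proof -
    define q where "q = f x div int d"
    have "f (x \<otimes> inv (t [^] q)) = f x mod int d"
      using x t f.hom_int_pow[OF t(1)] unfolding q_def by (simp add: minus_div_mult_eq_mod[symmetric])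
    moreover have "x \<otimes> inv (t [^] q) \<in> carrier G" using x t by simp
    ultimately have "int (nat (f x mod int d)) \<in> f ` carrier G"
      using d by (metis image_eqI int_nat_eq pos_mod_sign of_nat_0_less_iff)
    moreover have "nat (f x mod int d) < d" using d by (simp add: nat_less_iff)
    then have "\<not> P (nat (f x mod int d))" unfolding d_def by (rule not_less_Least)
    moreover have "0 \<le> f x mod int d" using d by simp
    ultimately have "f x mod int d = 0" unfolding P_def by simp
    then show ?thesis by (simp add: dvd_eq_mod_eq_0)
  qed
  have hom: "(\<lambda>x. f x div int d) \<in> hom G integer_group"
    using dvd by (simp add: hom_def)
  moreover have "f t div int d = 1" using t d by simp
  ultimately show ?thesis using t(1) by (intro bexI[OF _ hom] bexI[OF _ t(1)])
qed

lemma (in group) hom_onto_integer_group_if_infinite_abelianization: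
  assumes fg: "finitely_generated_group G" and inf: "infinite (rcosets (derived G (carrier G)))"
  shows "\<exists>deg \<in> hom G integer_group. \<exists>t \<in> carrier G. deg t = 1"
proof -
  let ?N = "derived G (carrier G)"
  let ?A = "G Mod ?N" and ?q = "\<lambda>a. ?N #> a"
  interpret N: normal ?N G by (rule derived_self_is_normal)
  interpret A: comm_group ?A by (rule derived_quot_is_comm_group)
  interpret q: group_hom G ?A ?q
    by (intro group_hom.intro group_hom_axioms.intro is_group A.is_group N.r_coset_hom_Mod)
  obtain S where S: "finite S" "S \<subseteq> carrier G" "generate G S = carrier G"
    using fg unfolding finitely_generated_group_def by blast
  have gen: "generate ?A (?q ` S) = carrier ?A"
    using q.generate_img[OF S(2)] S(3) by (simp add: carrier_FactGroup)
  have qS: "?q ` S \<subseteq> carrier ?A" using S(2) by (auto simp: carrier_FactGroup)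
  have "finite (carrier ?A) \<or>
      (\<exists>f \<in> hom (?A\<lparr>carrier := carrier ?A\<rparr>) integer_group. \<exists>x \<in> carrier ?A. f x \<noteq> 0)"
    using A.finite_or_hom_to_integer_group[OF finite_imageI[OF S(1)] qS] unfolding gen .
  moreover have "infinite (carrier ?A)" using inf by (simp add: FactGroup_def)
  ultimately obtain f x0 where f: "f \<in> hom ?A integer_group" and x0: "x0 \<in> carrier ?A" "f x0 \<noteq> 0"
    by auto
  obtain \<pi> t where \<pi>: "\<pi> \<in> hom ?A integer_group" and t: "t \<in> carrier ?A" "\<pi> t = 1"
    using A.hom_onto_integer_group_if_nonzero[OF f x0] by blast
  obtain t0 where t0: "t0 \<in> carrier G" "t = ?q t0" using t(1) by (auto simp: carrier_FactGroup)
  have "compose (carrier G) \<pi> ?q \<in> hom G integer_group" by (rule hom_compose[OF N.r_coset_hom_Mod \<pi>])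
  moreover have "compose (carrier G) \<pi> ?q t0 = 1" using t t0 by (simp add: compose_def)
  ultimately show ?thesis using t0(1) by blast
qed

section \<open>Counting along the profiles of a group action\<close>

locale profiled_action = group G for G (structure) +
  fixes M :: "'x set" and act :: "'a \<Rightarrow> 'x \<Rightarrow> 'x" and profile :: "'x \<Rightarrow> 'p"
  assumes act_closed: "h \<in> carrier G \<Longrightarrow> x \<in> M \<Longrightarrow> act h x \<in> M"
    and act_one: "x \<in> M \<Longrightarrow> act \<one> x = x"
    and act_mult: "h \<in> carrier G \<Longrightarrow> h' \<in> carrier G \<Longrightarrow> x \<in> M \<Longrightarrow> act (h \<otimes> h') x = act h (act h' x)"
    and profile_act_cong: "h \<in> carrier G \<Longrightarrow> x \<in> M \<Longrightarrow> y \<in> M \<Longrightarrow> profile x = profile y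
       \<Longrightarrow> profile (act h x) = profile (act h y)"
    and fibre_eqpoll_stabiliser: "x \<in> M \<Longrightarrow>
       {y \<in> M. profile y = profile x} \<approx> {h \<in> carrier G. profile (act h x) = profile x}"
begin

definition stabiliser :: "'x \<Rightarrow> 'a set" where
  "stabiliser x = {h \<in> carrier G. profile (act h x) = profile x}"

definition profile_orbit :: "'x \<Rightarrow> 'p set" where
  "profile_orbit x = (\<lambda>h. profile (act h x)) ` carrier G"

lemma act_inv_act: "h \<in> carrier G \<Longrightarrow> x \<in> M \<Longrightarrow> act (inv h) (act h x) = x"
  by (metis act_mult act_one inv_closed l_inv)

lemma fibre_eqpoll_fibre_act:
  assumes h: "h \<in> carrier G" and x: "x \<in> M"
  shows "{y \<in> M. profile y = profile (act h x)} \<approx> {y \<in> M. profile y = profile x}"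
  unfolding eqpoll_def
proof (rule exI[of _ "act (inv h)"], rule bij_betw_byWitness[where f'="act h"])
  have ih: "inv h \<in> carrier G" using h by simp
  show "\<forall>y\<in>{y \<in> M. profile y = profile (act h x)}. act h (act (inv h) y) = y"
    using act_inv_act[OF ih] h by simp
  show "\<forall>y\<in>{y \<in> M. profile y = profile x}. act (inv h) (act h y) = y"
    using act_inv_act[OF h] by simp
  show "act (inv h) ` {y \<in> M. profile y = profile (act h x)} \<subseteq> {y \<in> M. profile y = profile x}"
  proof clarify
    fix y assume y: "y \<in> M" "profile y = profile (act h x)"
    have "profile (act (inv h) y) = profile (act (inv h) (act h x))"
      by (rule profile_act_cong[OF ih y(1) act_closed[OF h x] y(2)])
    then show "act (inv h) y \<in> M \<and> profile (act (inv h) y) = profile x"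
      using act_closed[OF ih y(1)] act_inv_act[OF h x] by simp
  qed
  show "act h ` {y \<in> M. profile y = profile x} \<subseteq> {y \<in> M. profile y = profile (act h x)}"
    using act_closed[OF h] profile_act_cong[OF h _ x] by auto
qed

lemma level_set_eqpoll_stabiliser:
  assumes h0: "h0 \<in> carrier G" and x: "x \<in> M"
  shows "{h \<in> carrier G. profile (act h x) = profile (act h0 x)} \<approx> stabiliser x"
  unfolding eqpoll_def stabiliser_def
proof (rule exI[of _ "\<lambda>h. inv h0 \<otimes> h"], rule bij_betw_byWitness[where f'="\<lambda>q. h0 \<otimes> q"])
  have ih0: "inv h0 \<in> carrier G" using h0 by simp
  show "\<forall>h\<in>{h \<in> carrier G. profile (act h x) = profile (act h0 x)}. h0 \<otimes> (inv h0 \<otimes> h) = h"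
    using h0 by (simp add: m_assoc[symmetric])
  show "\<forall>q\<in>{h \<in> carrier G. profile (act h x) = profile x}. inv h0 \<otimes> (h0 \<otimes> q) = q"
    using h0 by (simp add: m_assoc[symmetric])
  show "(\<lambda>h. inv h0 \<otimes> h) ` {h \<in> carrier G. profile (act h x) = profile (act h0 x)}
      \<subseteq> {h \<in> carrier G. profile (act h x) = profile x}"
  proof clarify
    fix h assume h: "h \<in> carrier G" "profile (act h x) = profile (act h0 x)"
    have "profile (act (inv h0) (act h x)) = profile (act (inv h0) (act h0 x))"
      by (rule profile_act_cong[OF ih0 act_closed[OF h(1) x] act_closed[OF h0 x] h(2)])
    then show "inv h0 \<otimes> h \<in> carrier G \<and> profile (act (inv h0 \<otimes> h) x) = profile x"
      using act_mult[OF ih0 h(1) x] act_inv_act[OF h0 x] ih0 h(1) by simp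
  qed
  show "(\<lambda>q. h0 \<otimes> q) ` {h \<in> carrier G. profile (act h x) = profile x}
      \<subseteq> {h \<in> carrier G. profile (act h x) = profile (act h0 x)}"
    using h0 act_mult[OF h0 _ x] profile_act_cong[OF h0 act_closed[OF _ x] x] by auto
qed

text \<open>Both sets decompose, along the orbit, into pieces equipollent to the stabiliser.\<close>

lemma profile_class_eqpoll_carrier:
  assumes x: "x \<in> M"
  shows "{y \<in> M. profile y \<in> profile_orbit x} \<approx> carrier G"
proof -
  have "{y \<in> M. profile y \<in> profile_orbit x} \<approx> profile_orbit x \<times> stabiliser x"
  proof (rule eqpoll_Times_if_fibres_eqpoll)
    fix \<delta> assume "\<delta> \<in> profile_orbit x"
    then obtain h where h: "h \<in> carrier G" and \<delta>: "\<delta> = profile (act h x)"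
      unfolding profile_orbit_def by blast
    have "{y \<in> {y \<in> M. profile y \<in> profile_orbit x}. profile y = \<delta>}
        = {y \<in> M. profile y = profile (act h x)}"
      using h \<delta> unfolding profile_orbit_def by blast
    also have "\<dots> \<approx> {y \<in> M. profile y = profile x}" by (rule fibre_eqpoll_fibre_act[OF h x])
    also have "\<dots> \<approx> stabiliser x" unfolding stabiliser_def by (rule fibre_eqpoll_stabiliser[OF x])
    finally show "{y \<in> {y \<in> M. profile y \<in> profile_orbit x}. profile y = \<delta>} \<approx> stabiliser x" .
  qed auto
  moreover have "carrier G \<approx> profile_orbit x \<times> stabiliser x"
  proof (rule eqpoll_Times_if_fibres_eqpoll[where f="\<lambda>h. profile (act h x)"])
    fix \<delta> assume "\<delta> \<in> profile_orbit x"
    then obtain h0 where h0: "h0 \<in> carrier G" and \<delta>: "\<delta> = profile (act h0 x)"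
      unfolding profile_orbit_def by blast
    show "{h \<in> carrier G. profile (act h x) = \<delta>} \<approx> stabiliser x"
      unfolding \<delta> by (rule level_set_eqpoll_stabiliser[OF h0 x])
  qed (auto simp: profile_orbit_def)
  ultimately show ?thesis using eqpoll_sym eqpoll_trans by blast
qed

lemma profile_orbit_eq:
  assumes x: "x \<in> M" and y: "y \<in> M" and xy: "profile y \<in> profile_orbit x"
  shows "profile_orbit y = profile_orbit x"
proof -
  obtain h0 where h0: "h0 \<in> carrier G" and e: "profile y = profile (act h0 x)"
    using xy unfolding profile_orbit_def by blast
  have "profile (act h y) = profile (act (h \<otimes> h0) x)" if h: "h \<in> carrier G" for h
    using profile_act_cong[OF h y act_closed[OF h0 x] e] act_mult[OF h h0 x] by simp
  then have "profile_orbit y = (\<lambda>h. profile (act h x)) ` ((\<lambda>h. h \<otimes> h0) ` carrier G)"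
    unfolding profile_orbit_def image_image by (rule image_cong[OF refl])
  also have "(\<lambda>h. h \<otimes> h0) ` carrier G = carrier G"
    using coset_join2[OF h0 subgroup_self h0] by (auto simp: r_coset_def)
  finally show ?thesis unfolding profile_orbit_def .
qed

theorem card_dvd_carrier_if_saturated:
  assumes S: "S \<subseteq> M"
    and saturated: "\<And>x y. x \<in> S \<Longrightarrow> y \<in> M \<Longrightarrow> profile y \<in> profile_orbit x \<Longrightarrow> y \<in> S"
  shows "card_dvd (carrier G) S"
proof -
  have "S \<approx> profile_orbit ` S \<times> carrier G"
  proof (rule eqpoll_Times_if_fibres_eqpoll)
    fix Orb assume "Orb \<in> profile_orbit ` S"
    then obtain x where x: "x \<in> S" and Orb: "Orb = profile_orbit x" by blast
    have self: "profile y \<in> profile_orbit y" if "y \<in> M" for y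
      unfolding profile_orbit_def using act_one[OF that] by force
    have "{y \<in> S. profile_orbit y = Orb} = {y \<in> M. profile y \<in> profile_orbit x}"
      using S saturated[OF x] profile_orbit_eq[of x] x self unfolding Orb by blast
    also have "\<dots> \<approx> carrier G" using S x by (intro profile_class_eqpoll_carrier) blast
    finally show "{y \<in> S. profile_orbit y = Orb} \<approx> carrier G" .
  qed auto
  then have "S \<approx> carrier G \<times> profile_orbit ` S" using times_commute_eqpoll eqpoll_trans by blast
  then show ?thesis by (rule card_dvdI)
qed

end

section \<open>Homomorphisms out of a group split over \<open>\<int>\<close>\<close>

locale int_split = group F for F (structure) +
  fixes deg :: "'a \<Rightarrow> int" and t :: 'a
  assumes deg_hom: "deg \<in> hom F integer_group" and t_carrier: "t \<in> carrier F" and deg_t: "deg t = 1"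
begin

sublocale deg: group_hom F integer_group deg
  by (intro group_hom.intro group_hom_axioms.intro is_group group_integer_group deg_hom)

abbreviation K :: "'a set" where "K \<equiv> kernel F integer_group deg"

lemma deg_t_pow [simp]: "deg (t [^] (n::int)) = n"
  using deg.hom_int_pow[OF t_carrier] by (simp add: deg_t)

lemma kernel_part: "x \<in> carrier F \<Longrightarrow> x \<otimes> inv (t [^] deg x) \<in> K"
  using t_carrier by (simp add: kernel_def)

lemma kernel_subset: "K \<subseteq> carrier F"
  by (simp add: kernel_def)

lemma conj_kernel: "y \<in> carrier F \<Longrightarrow> k \<in> K \<Longrightarrow> y \<otimes> k \<otimes> inv y \<in> K"
  by (rule normal.inv_op_closed2[OF deg.normal_kernel])

end

locale int_split_homs = F: int_split F deg t + group G
  for F :: "('f, 'e) monoid_scheme" and deg t and G :: "('g, 'c) monoid_scheme" (structure) +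
  fixes H :: "'g set"
  assumes H: "subgroup H G"
begin

definition conj_hom :: "'g \<Rightarrow> ('f \<Rightarrow> 'g) \<Rightarrow> 'f \<Rightarrow> 'g" where
  "conj_hom h \<phi> = (\<lambda>x\<in>carrier F. h \<otimes> \<phi> x \<otimes> inv h)"

definition profile :: "('f \<Rightarrow> 'g) \<Rightarrow> ('f \<Rightarrow> 'g) \<times> ('f \<Rightarrow> 'g set)" where
  "profile \<phi> = (restrict \<phi> F.K, \<lambda>x\<in>carrier F. \<phi> x <# H)"

text \<open>For \<open>q\<close> centralising \<open>\<phi> ` K\<close> this is the homomorphism that agrees with \<open>\<phi>\<close> on \<open>K\<close> and
  sends \<open>t\<close> to \<open>\<phi> t \<otimes> q\<close>: writing \<open>x = k t\<^sup>n\<close> with \<open>k \<in> K\<close> and \<open>n = deg x\<close>, it maps \<open>x\<close> to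
  \<open>\<phi> k (\<phi> t q)\<^sup>n\<close>.\<close>

definition twist :: "('f \<Rightarrow> 'g) \<Rightarrow> 'g \<Rightarrow> 'f \<Rightarrow> 'g" where
  "twist \<phi> q = (\<lambda>x\<in>carrier F. \<phi> (x \<otimes>\<^bsub>F\<^esub> inv\<^bsub>F\<^esub> (t [^]\<^bsub>F\<^esub> deg x)) \<otimes> (\<phi> t \<otimes> q) [^] deg x)"

definition twisters :: "('f \<Rightarrow> 'g) \<Rightarrow> 'g set" where
  "twisters \<phi> = {q \<in> H. (\<forall>k\<in>F.K. q \<otimes> \<phi> k = \<phi> k \<otimes> q) \<and> (\<forall>x\<in>carrier F. q <# (\<phi> x <# H) = \<phi> x <# H)}"

lemma H_carrier: "H \<subseteq> carrier G"
  using H by (rule subgroup.subset)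

lemma homs_group_hom: "\<phi> \<in> homs F G \<Longrightarrow> group_hom F G \<phi>"
  unfolding homs_def by (intro group_hom.intro group_hom_axioms.intro F.is_group is_group) simp

lemma homs_closed: "\<phi> \<in> homs F G \<Longrightarrow> x \<in> carrier F \<Longrightarrow> \<phi> x \<in> carrier G"
  using group_hom.hom_closed[OF homs_group_hom] .

lemma homs_mult: "\<phi> \<in> homs F G \<Longrightarrow> x \<in> carrier F \<Longrightarrow> y \<in> carrier F \<Longrightarrow> \<phi> (x \<otimes>\<^bsub>F\<^esub> y) = \<phi> x \<otimes> \<phi> y"
  using group_hom.hom_mult[OF homs_group_hom] .

lemma homs_inv: "\<phi> \<in> homs F G \<Longrightarrow> x \<in> carrier F \<Longrightarrow> \<phi> (inv\<^bsub>F\<^esub> x) = inv (\<phi> x)"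
  using group_hom.hom_inv[OF homs_group_hom] .

lemma homs_int_pow: "\<phi> \<in> homs F G \<Longrightarrow> x \<in> carrier F \<Longrightarrow> \<phi> (x [^]\<^bsub>F\<^esub> (n::int)) = \<phi> x [^] n"
  using group_hom.hom_int_pow[OF homs_group_hom] .

lemma homs_eqI:
  assumes \<phi>: "\<phi> \<in> homs F G" and \<psi>: "\<psi> \<in> homs F G"
    and on_kernel: "\<And>k. k \<in> F.K \<Longrightarrow> \<phi> k = \<psi> k" and on_t: "\<phi> t = \<psi> t"
  shows "\<phi> = \<psi>"
proof (rule extensionalityI)
  show "\<phi> \<in> extensional (carrier F)" "\<psi> \<in> extensional (carrier F)"
    using \<phi> \<psi> by (simp_all add: homs_def)
next
  fix x assume x: "x \<in> carrier F"
  define k where "k = x \<otimes>\<^bsub>F\<^esub> inv\<^bsub>F\<^esub> (t [^]\<^bsub>F\<^esub> deg x)"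
  have k: "k \<in> F.K" unfolding k_def by (rule F.kernel_part[OF x])
  have x_eq: "x = k \<otimes>\<^bsub>F\<^esub> t [^]\<^bsub>F\<^esub> deg x"
    unfolding k_def using x F.t_carrier by (simp add: F.m_assoc)
  have "\<phi> (k \<otimes>\<^bsub>F\<^esub> t [^]\<^bsub>F\<^esub> deg x) = \<psi> (k \<otimes>\<^bsub>F\<^esub> t [^]\<^bsub>F\<^esub> deg x)"
    using k F.kernel_subset F.t_carrier
    by (simp add: homs_mult[OF \<phi>] homs_mult[OF \<psi>] homs_int_pow[OF \<phi>] homs_int_pow[OF \<psi>] on_kernel on_t subsetD)
  then show "\<phi> x = \<psi> x" using x_eq by simp
qed

lemma twist_apply:
  "x \<in> carrier F \<Longrightarrow>
     twist \<phi> q x = \<phi> (x \<otimes>\<^bsub>F\<^esub> inv\<^bsub>F\<^esub> (t [^]\<^bsub>F\<^esub> deg x)) \<otimes> (\<phi> t \<otimes> q) [^] deg x"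
  by (simp add: twist_def)

lemma twist_kernel:
  assumes \<phi>: "\<phi> \<in> homs F G" and k: "k \<in> F.K"
  shows "twist \<phi> q k = \<phi> k"
  using k homs_closed[OF \<phi>] by (simp add: twist_apply kernel_def)

lemma twist_t:
  assumes \<phi>: "\<phi> \<in> homs F G" and q: "q \<in> carrier G"
  shows "twist \<phi> q t = \<phi> t \<otimes> q"
  using F.t_carrier homs_closed[OF \<phi>] group_hom.hom_one[OF homs_group_hom[OF \<phi>]] q
  by (simp add: twist_apply F.deg_t)

lemma homs_conj_t_pow:
  "\<phi> \<in> homs F G \<Longrightarrow> k \<in> F.K \<Longrightarrow>
     \<phi> t [^] n \<otimes> \<phi> k \<otimes> inv (\<phi> t [^] n) = \<phi> (t [^]\<^bsub>F\<^esub> (n::int) \<otimes>\<^bsub>F\<^esub> k \<otimes>\<^bsub>F\<^esub> inv\<^bsub>F\<^esub> (t [^]\<^bsub>F\<^esub> n))"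
  using F.kernel_subset F.t_carrier by (simp add: homs_mult homs_inv homs_int_pow subsetD)

lemma conj_twist_pow:
  assumes \<phi>: "\<phi> \<in> homs F G" and q: "q \<in> carrier G"
    and centralises: "\<And>k. k \<in> F.K \<Longrightarrow> q \<otimes> \<phi> k = \<phi> k \<otimes> q" and k: "k \<in> F.K"
  shows "(\<phi> t \<otimes> q) [^] n \<otimes> \<phi> k \<otimes> inv ((\<phi> t \<otimes> q) [^] n)
    = \<phi> (t [^]\<^bsub>F\<^esub> (n::int) \<otimes>\<^bsub>F\<^esub> k \<otimes>\<^bsub>F\<^esub> inv\<^bsub>F\<^esub> (t [^]\<^bsub>F\<^esub> n))"
proof -
  have a: "\<phi> t \<in> carrier G" using homs_closed[OF \<phi> F.t_carrier] .
  have "(\<phi> t \<otimes> q) [^] n \<otimes> \<phi> k \<otimes> inv ((\<phi> t \<otimes> q) [^] n) = \<phi> t [^] n \<otimes> \<phi> k \<otimes> inv (\<phi> t [^] n)"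
  proof (rule conj_int_pow_mult_commuting[OF a q _ _ _ imageI[OF k]])
    show "\<phi> ` F.K \<subseteq> carrier G" using homs_closed[OF \<phi>] F.kernel_subset by blast
    show "q \<otimes> y = y \<otimes> q" if "y \<in> \<phi> ` F.K" for y using that centralises by blast
    show "\<phi> t [^] m \<otimes> y \<otimes> inv (\<phi> t [^] m) \<in> \<phi> ` F.K" if y: "y \<in> \<phi> ` F.K" for m :: int and y
    proof -
      obtain k where k: "k \<in> F.K" "y = \<phi> k" using y by blast
      show ?thesis
        unfolding k(2) homs_conj_t_pow[OF \<phi> k(1)] using F.t_carrier
        by (intro imageI F.conj_kernel[OF _ k(1)]) simp
    qed
  qed
  then show ?thesis using homs_conj_t_pow[OF \<phi> k] by simp
qed

lemma twist_homs:
  assumes \<phi>: "\<phi> \<in> homs F G" and q: "q \<in> carrier G"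
    and centralises: "\<And>k. k \<in> F.K \<Longrightarrow> q \<otimes> \<phi> k = \<phi> k \<otimes> q"
  shows "twist \<phi> q \<in> homs F G"
proof -
  let ?T = "\<lambda>n::int. t [^]\<^bsub>F\<^esub> n" and ?b = "\<phi> t \<otimes> q"
  have T: "?T n \<in> carrier F" for n using F.t_carrier by simp
  have b: "?b \<in> carrier G" using homs_closed[OF \<phi> F.t_carrier] q by auto
  have mult: "twist \<phi> q (x \<otimes>\<^bsub>F\<^esub> y) = twist \<phi> q x \<otimes> twist \<phi> q y"
    if x: "x \<in> carrier F" and y: "y \<in> carrier F" for x y
  proof -
    define m n where "m = deg x" and "n = deg y"
    define kx ky where "kx = x \<otimes>\<^bsub>F\<^esub> inv\<^bsub>F\<^esub> ?T m" and "ky = y \<otimes>\<^bsub>F\<^esub> inv\<^bsub>F\<^esub> ?T n"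
    have kx: "kx \<in> F.K" and ky: "ky \<in> F.K"
      unfolding kx_def ky_def m_def n_def using F.kernel_part x y by auto
    have kx_c: "kx \<in> carrier F" and ky_c: "ky \<in> carrier F" using kx ky F.kernel_subset by auto
    have ky': "?T m \<otimes>\<^bsub>F\<^esub> ky \<otimes>\<^bsub>F\<^esub> inv\<^bsub>F\<^esub> ?T m \<in> carrier F" using T ky_c by simp
    have "(x \<otimes>\<^bsub>F\<^esub> y) \<otimes>\<^bsub>F\<^esub> inv\<^bsub>F\<^esub> ?T (m + n) = kx \<otimes>\<^bsub>F\<^esub> (?T m \<otimes>\<^bsub>F\<^esub> ky \<otimes>\<^bsub>F\<^esub> inv\<^bsub>F\<^esub> ?T m)"
      unfolding kx_def ky_def using x y T F.t_carrier
      by (simp add: F.int_pow_mult F.m_assoc F.inv_mult_group)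
    moreover have "deg (x \<otimes>\<^bsub>F\<^esub> y) = m + n" unfolding m_def n_def using x y by simp
    ultimately have "twist \<phi> q (x \<otimes>\<^bsub>F\<^esub> y)
        = \<phi> kx \<otimes> (?b [^] m \<otimes> \<phi> ky \<otimes> inv (?b [^] m)) \<otimes> ?b [^] (m + n)"
      using x y kx_c ky'
      by (simp add: twist_apply homs_mult[OF \<phi>] conj_twist_pow[OF \<phi> q centralises ky])
    also have "\<dots> = (\<phi> kx \<otimes> ?b [^] m) \<otimes> (\<phi> ky \<otimes> ?b [^] n)"
      using b homs_closed[OF \<phi> kx_c] homs_closed[OF \<phi> ky_c]
      by (simp add: int_pow_mult m_assoc inv_mult_group)
    also have "\<dots> = twist \<phi> q x \<otimes> twist \<phi> q y"
      using x y by (simp add: twist_apply kx_def ky_def m_def n_def)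
    finally show ?thesis .
  qed
  have "twist \<phi> q \<in> carrier F \<rightarrow> carrier G"
    using homs_closed[OF \<phi>] F.t_carrier b by (auto simp: twist_apply)
  with mult show ?thesis by (simp add: homs_def hom_def twist_def)
qed

lemma profile_eq_iff:
  "profile \<psi> = profile \<phi> \<longleftrightarrow> (\<forall>k\<in>F.K. \<psi> k = \<phi> k) \<and> (\<forall>x\<in>carrier F. \<psi> x <# H = \<phi> x <# H)"
  unfolding profile_def by (auto simp: fun_eq_iff restrict_def)

lemma profile_twist:
  assumes \<phi>: "\<phi> \<in> homs F G" and q: "q \<in> twisters \<phi>"
  shows "profile (twist \<phi> q) = profile \<phi>"
  unfolding profile_eq_iff
proof (intro conjI ballI)
  fix k assume "k \<in> F.K"
  then show "twist \<phi> q k = \<phi> k" by (rule twist_kernel[OF \<phi>])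
next
  fix x assume x: "x \<in> carrier F"
  have qc: "q \<in> carrier G" using q H_carrier by (auto simp: twisters_def)
  have fixes_cosets: "q <# (\<phi> t [^] n <# H) = \<phi> t [^] n <# H" for n :: int
    using q F.t_carrier by (auto simp: twisters_def homs_int_pow[OF \<phi>, symmetric])
  define k where "k = x \<otimes>\<^bsub>F\<^esub> inv\<^bsub>F\<^esub> (t [^]\<^bsub>F\<^esub> deg x)"
  have k: "k \<in> carrier F" unfolding k_def using x F.t_carrier by simp
  have a: "\<phi> t \<in> carrier G" using homs_closed[OF \<phi> F.t_carrier] .
  have "twist \<phi> q x <# H = \<phi> k <# ((\<phi> t \<otimes> q) [^] deg x <# H)"
    using x k a qc H_carrier by (simp add: twist_apply k_def lcos_m_assoc homs_closed[OF \<phi>])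
  also have "\<dots> = \<phi> k <# (\<phi> t [^] deg x <# H)"
    by (simp only: int_pow_mult_l_coset[OF a qc H_carrier fixes_cosets])
  also have "\<dots> = \<phi> (k \<otimes>\<^bsub>F\<^esub> t [^]\<^bsub>F\<^esub> deg x) <# H"
    using k a H_carrier F.t_carrier
    by (simp add: lcos_m_assoc homs_closed[OF \<phi>] homs_mult[OF \<phi>] homs_int_pow[OF \<phi>])
  also have "k \<otimes>\<^bsub>F\<^esub> t [^]\<^bsub>F\<^esub> deg x = x"
    unfolding k_def using x F.t_carrier by (simp add: F.m_assoc)
  finally show "twist \<phi> q x <# H = \<phi> x <# H" .
qed

lemma twist_parameter_centralises:
  assumes \<phi>: "\<phi> \<in> homs F G" and \<psi>: "\<psi> \<in> homs F G"
    and on_kernel: "\<And>k. k \<in> F.K \<Longrightarrow> \<psi> k = \<phi> k" and k: "k \<in> F.K"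
  shows "(inv (\<phi> t) \<otimes> \<psi> t) \<otimes> \<phi> k = \<phi> k \<otimes> (inv (\<phi> t) \<otimes> \<psi> t)"
proof -
  define a q where "a = \<phi> t" and "q = inv a \<otimes> \<psi> t"
  have a: "a \<in> carrier G" and qc: "q \<in> carrier G" and aq: "a \<otimes> q = \<psi> t"
    unfolding q_def a_def using homs_closed \<phi> \<psi> F.t_carrier by auto
  define k' where "k' = t \<otimes>\<^bsub>F\<^esub> k \<otimes>\<^bsub>F\<^esub> inv\<^bsub>F\<^esub> t"
  have kc: "k \<in> carrier F" using k F.kernel_subset by blast
  have k': "k' \<in> F.K" unfolding k'_def by (rule F.conj_kernel[OF F.t_carrier k])
  have k'c: "k' \<in> carrier F" using k' F.kernel_subset by blast
  have tk: "t \<otimes>\<^bsub>F\<^esub> k = k' \<otimes>\<^bsub>F\<^esub> t"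
    unfolding k'_def using kc F.t_carrier by (simp add: F.m_assoc)
  have "a \<otimes> (q \<otimes> \<phi> k) = \<psi> (t \<otimes>\<^bsub>F\<^esub> k)"
    using a qc kc homs_closed[OF \<phi>] F.t_carrier
    by (simp add: homs_mult[OF \<psi>] on_kernel[OF k] aq m_assoc[symmetric])
  also have "\<dots> = \<phi> k' \<otimes> (a \<otimes> q)"
    using k'c F.t_carrier by (simp add: tk homs_mult[OF \<psi>] on_kernel[OF k'] aq)
  also have "\<dots> = a \<otimes> (\<phi> k \<otimes> q)"
    using a qc kc k'c F.t_carrier homs_closed[OF \<phi>]
    by (simp add: m_assoc[symmetric] homs_mult[OF \<phi>, symmetric] tk[symmetric] a_def)
  finally show ?thesis using a qc kc homs_closed[OF \<phi>] unfolding q_def a_def by simp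
qed

lemma twist_parameter_fixes_cosets:
  assumes \<phi>: "\<phi> \<in> homs F G" and \<psi>: "\<psi> \<in> homs F G"
    and on_cosets: "\<And>x. x \<in> carrier F \<Longrightarrow> \<psi> x <# H = \<phi> x <# H" and x: "x \<in> carrier F"
  shows "(inv (\<phi> t) \<otimes> \<psi> t) <# (\<phi> x <# H) = \<phi> x <# H"
proof -
  define a q where "a = \<phi> t" and "q = inv a \<otimes> \<psi> t"
  have a: "a \<in> carrier G" and \<psi>t: "\<psi> t \<in> carrier G"
    unfolding a_def using homs_closed \<phi> \<psi> F.t_carrier by auto
  have qc: "q \<in> carrier G" and aq: "a \<otimes> q = \<psi> t" unfolding q_def using a \<psi>t by auto
  have M: "\<phi> x <# H \<subseteq> carrier G" using l_coset_subset_G[OF H_carrier homs_closed[OF \<phi> x]] .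
  have "a <# (q <# (\<phi> x <# H)) = \<psi> t <# (\<psi> x <# H)"
    using M a qc x by (simp add: lcos_m_assoc aq on_cosets)
  also have "\<dots> = \<phi> (t \<otimes>\<^bsub>F\<^esub> x) <# H"
    using x F.t_carrier \<psi>t homs_closed[OF \<psi>] H_carrier
    by (simp add: lcos_m_assoc homs_mult[OF \<psi>] on_cosets[symmetric])
  also have "\<dots> = a <# (\<phi> x <# H)"
    using x F.t_carrier a homs_closed[OF \<phi>] H_carrier by (simp add: lcos_m_assoc homs_mult[OF \<phi>] a_def)
  finally have "inv a <# (a <# (q <# (\<phi> x <# H))) = inv a <# (a <# (\<phi> x <# H))" by simp
  then show ?thesis
    using M a qc unfolding q_def a_def by (simp add: lcos_m_assoc l_coset_subset_G lcos_mult_one)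
qed

lemma twist_parameter_mem_twisters:
  assumes \<phi>: "\<phi> \<in> homs F G" and \<psi>: "\<psi> \<in> homs F G" and same: "profile \<psi> = profile \<phi>"
  shows "inv (\<phi> t) \<otimes> \<psi> t \<in> twisters \<phi>"
proof -
  have on_kernel: "\<And>k. k \<in> F.K \<Longrightarrow> \<psi> k = \<phi> k"
    and on_cosets: "\<And>x. x \<in> carrier F \<Longrightarrow> \<psi> x <# H = \<phi> x <# H"
    using same by (auto simp: profile_eq_iff)
  have a: "\<phi> t \<in> carrier G" and \<psi>t: "\<psi> t \<in> carrier G" using homs_closed \<phi> \<psi> F.t_carrier by auto
  have "\<psi> t \<in> \<phi> t <# H" using lcos_self[OF \<psi>t H] on_cosets[OF F.t_carrier] by simp
  then obtain h where "h \<in> H" "\<psi> t = \<phi> t \<otimes> h" unfolding l_coset_def by blast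
  then have "inv (\<phi> t) \<otimes> \<psi> t \<in> H" using a H_carrier by auto
  then show ?thesis
    unfolding twisters_def
    using twist_parameter_centralises[OF \<phi> \<psi> on_kernel] twist_parameter_fixes_cosets[OF \<phi> \<psi> on_cosets]
    by blast
qed

lemma twisters_centralise:
  "q \<in> twisters \<phi> \<Longrightarrow> k \<in> F.K \<Longrightarrow> q \<otimes> \<phi> k = \<phi> k \<otimes> q"
  by (simp add: twisters_def)

lemma twisters_carrier: "twisters \<phi> \<subseteq> carrier G"
  using H_carrier by (auto simp: twisters_def)

lemma eq_twist_if_profile_eq:
  assumes \<phi>: "\<phi> \<in> homs F G" and \<psi>: "\<psi> \<in> homs F G" and same: "profile \<psi> = profile \<phi>"
  shows "twist \<phi> (inv (\<phi> t) \<otimes> \<psi> t) = \<psi>"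
proof (rule homs_eqI)
  let ?q = "inv (\<phi> t) \<otimes> \<psi> t"
  have q: "?q \<in> twisters \<phi>" by (rule twist_parameter_mem_twisters[OF \<phi> \<psi> same])
  show "twist \<phi> ?q \<in> homs F G"
    using twist_homs[OF \<phi> _ twisters_centralise[OF q]] q twisters_carrier by blast
  show "twist \<phi> ?q k = \<psi> k" if "k \<in> F.K" for k
    using that same by (simp add: twist_kernel[OF \<phi>] profile_eq_iff)
  show "twist \<phi> ?q t = \<psi> t"
    using homs_closed \<phi> \<psi> F.t_carrier by (simp add: twist_t[OF \<phi>])
qed (rule \<psi>)

lemma profile_fibre_eqpoll_twisters:
  assumes \<phi>: "\<phi> \<in> homs F G"
  shows "{\<psi> \<in> homs F G. profile \<psi> = profile \<phi>} \<approx> twisters \<phi>"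
  unfolding eqpoll_def
proof (rule exI, rule bij_betw_byWitness[where f'="twist \<phi>"])
  show "\<forall>\<psi>\<in>{\<psi> \<in> homs F G. profile \<psi> = profile \<phi>}. twist \<phi> (inv (\<phi> t) \<otimes> \<psi> t) = \<psi>"
    using eq_twist_if_profile_eq[OF \<phi>] by blast
  show "\<forall>q\<in>twisters \<phi>. inv (\<phi> t) \<otimes> twist \<phi> q t = q"
    using twisters_carrier[of \<phi>] homs_closed[OF \<phi> F.t_carrier] by (auto simp: twist_t[OF \<phi>])
  show "(\<lambda>\<psi>. inv (\<phi> t) \<otimes> \<psi> t) ` {\<psi> \<in> homs F G. profile \<psi> = profile \<phi>} \<subseteq> twisters \<phi>"
    using twist_parameter_mem_twisters[OF \<phi>] by blast
  show "twist \<phi> ` twisters \<phi> \<subseteq> {\<psi> \<in> homs F G. profile \<psi> = profile \<phi>}"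
    using twist_homs[OF \<phi>] twisters_centralise twisters_carrier profile_twist[OF \<phi>] by blast
qed

lemma conj_hom_apply: "x \<in> carrier F \<Longrightarrow> conj_hom h \<phi> x = h \<otimes> \<phi> x \<otimes> inv h"
  by (simp add: conj_hom_def)

lemma conj_hom_homs:
  assumes h: "h \<in> carrier G" and \<phi>: "\<phi> \<in> homs F G"
  shows "conj_hom h \<phi> \<in> homs F G"
proof -
  have "conj_hom h \<phi> (x \<otimes>\<^bsub>F\<^esub> y) = conj_hom h \<phi> x \<otimes> conj_hom h \<phi> y"
    if "x \<in> carrier F" "y \<in> carrier F" for x y
    using that h homs_closed[OF \<phi>] by (simp add: conj_hom_apply homs_mult[OF \<phi>] m_assoc)
  moreover have "conj_hom h \<phi> \<in> carrier F \<rightarrow> carrier G"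
    using h homs_closed[OF \<phi>] by (simp add: conj_hom_apply)
  ultimately show ?thesis by (simp add: homs_def hom_def conj_hom_def)
qed

lemma conj_hom_mult:
  assumes "h \<in> carrier G" "h' \<in> carrier G" and \<phi>: "\<phi> \<in> homs F G"
  shows "conj_hom (h \<otimes> h') \<phi> = conj_hom h (conj_hom h' \<phi>)"
  using assms homs_closed[OF \<phi>] by (auto simp: conj_hom_def m_assoc inv_mult_group)

lemma conj_hom_one: "\<phi> \<in> homs F G \<Longrightarrow> conj_hom \<one> \<phi> = \<phi>"
  using homs_closed by (auto simp: conj_hom_def homs_def extensional_def)

lemma conj_hom_l_coset:
  "\<phi> \<in> homs F G \<Longrightarrow> h \<in> H \<Longrightarrow> x \<in> carrier F \<Longrightarrow> conj_hom h \<phi> x <# H = h <# (\<phi> x <# H)"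
  by (simp add: conj_hom_apply conj_l_coset[OF H] homs_closed)

lemma profile_conj_hom_cong:
  assumes h: "h \<in> H" and \<phi>: "\<phi> \<in> homs F G" and \<psi>: "\<psi> \<in> homs F G" and same: "profile \<phi> = profile \<psi>"
  shows "profile (conj_hom h \<phi>) = profile (conj_hom h \<psi>)"
proof -
  have on_kernel: "\<forall>k\<in>F.K. \<phi> k = \<psi> k" and on_cosets: "\<forall>x\<in>carrier F. \<phi> x <# H = \<psi> x <# H"
    using same by (simp_all add: profile_eq_iff)
  show ?thesis unfolding profile_eq_iff
  proof (intro conjI ballI)
    fix k assume "k \<in> F.K"
    then show "conj_hom h \<phi> k = conj_hom h \<psi> k"
      using on_kernel F.kernel_subset by (auto simp: conj_hom_apply)
  next
    fix x assume "x \<in> carrier F"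
    then show "conj_hom h \<phi> x <# H = conj_hom h \<psi> x <# H"
      using on_cosets by (simp add: conj_hom_l_coset[OF \<phi> h] conj_hom_l_coset[OF \<psi> h])
  qed
qed

lemma twisters_eq_stabiliser:
  assumes \<phi>: "\<phi> \<in> homs F G"
  shows "twisters \<phi> = {u \<in> H. profile (conj_hom u \<phi>) = profile \<phi>}"
  unfolding twisters_def profile_eq_iff
proof (rule Collect_cong, rule conj_cong[OF refl], rule conj_cong)
  fix u assume u: "u \<in> H"
  show "(\<forall>k\<in>F.K. u \<otimes> \<phi> k = \<phi> k \<otimes> u) \<longleftrightarrow> (\<forall>k\<in>F.K. conj_hom u \<phi> k = \<phi> k)"
  proof (rule ball_cong[OF refl])
    fix k assume "k \<in> F.K"
    then have "k \<in> carrier F" using F.kernel_subset by blast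
    moreover have "u \<in> carrier G" using u H_carrier by blast
    ultimately show "u \<otimes> \<phi> k = \<phi> k \<otimes> u \<longleftrightarrow> conj_hom u \<phi> k = \<phi> k"
      using homs_closed[OF \<phi>] by (simp add: conj_hom_apply conj_eq_iff_commute)
  qed
  show "(\<forall>x\<in>carrier F. u <# (\<phi> x <# H) = \<phi> x <# H) \<longleftrightarrow> (\<forall>x\<in>carrier F. conj_hom u \<phi> x <# H = \<phi> x <# H)"
    by (simp add: conj_hom_l_coset[OF \<phi> u])
qed

sublocale conj_action: profiled_action "G\<lparr>carrier := H\<rparr>" "homs F G" conj_hom profile
proof (intro profiled_action.intro profiled_action_axioms.intro subgroup_imp_group[OF H])
  show "conj_hom h \<phi> \<in> homs F G" if "h \<in> carrier (G\<lparr>carrier := H\<rparr>)" "\<phi> \<in> homs F G" for h \<phi>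
    using that H_carrier conj_hom_homs by auto
  show "conj_hom \<one>\<^bsub>G\<lparr>carrier := H\<rparr>\<^esub> \<phi> = \<phi>" if "\<phi> \<in> homs F G" for \<phi>
    using that conj_hom_one by simp
  show "conj_hom (h \<otimes>\<^bsub>G\<lparr>carrier := H\<rparr>\<^esub> h') \<phi> = conj_hom h (conj_hom h' \<phi>)"
    if "h \<in> carrier (G\<lparr>carrier := H\<rparr>)" "h' \<in> carrier (G\<lparr>carrier := H\<rparr>)" "\<phi> \<in> homs F G" for h h' \<phi>
    using that H_carrier by (simp add: conj_hom_mult subsetD)
  show "profile (conj_hom h \<phi>) = profile (conj_hom h \<psi>)"
    if "h \<in> carrier (G\<lparr>carrier := H\<rparr>)" "\<phi> \<in> homs F G" "\<psi> \<in> homs F G" "profile \<phi> = profile \<psi>" for h \<phi> \<psi>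
    using that by (intro profile_conj_hom_cong) simp_all
  show "{\<psi> \<in> homs F G. profile \<psi> = profile \<phi>}
      \<approx> {h \<in> carrier (G\<lparr>carrier := H\<rparr>). profile (conj_hom h \<phi>) = profile \<phi>}"
    if "\<phi> \<in> homs F G" for \<phi>
    using profile_fibre_eqpoll_twisters[OF that] twisters_eq_stabiliser[OF that] by simp
qed

lemma double_coset_mem_if_profile_conj:
  assumes \<phi>: "\<phi> \<in> homs F G" and \<psi>: "\<psi> \<in> homs F G" and h: "h \<in> H"
    and same: "profile \<psi> = profile (conj_hom h \<phi>)" and w: "w \<in> carrier F" and a: "a \<in> carrier G"
    and \<phi>w: "\<phi> w \<in> double_coset G H a"
  shows "\<psi> w \<in> double_coset G H a"
proof -
  have "\<psi> w \<in> \<psi> w <# H" using lcos_self[OF homs_closed[OF \<psi> w] H] .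
  also have "\<psi> w <# H = h <# (\<phi> w <# H)"
    using same w by (simp add: profile_eq_iff conj_hom_l_coset[OF \<phi> h])
  finally obtain h' where h': "h' \<in> H" and \<psi>w: "\<psi> w = h \<otimes> (\<phi> w \<otimes> h')"
    unfolding l_coset_def by blast
  show ?thesis unfolding \<psi>w by (rule double_coset_mult_closed[OF H a h h' \<phi>w])
qed

theorem card_dvd_homs_double_coset:
  assumes W: "W \<subseteq> carrier F" and g: "g \<in> W \<rightarrow> carrier G"
  shows "card_dvd H {\<phi> \<in> homs F G. \<forall>w\<in>W. \<phi> w \<in> double_coset G H (g w)}"
proof -
  have "card_dvd (carrier (G\<lparr>carrier := H\<rparr>)) {\<phi> \<in> homs F G. \<forall>w\<in>W. \<phi> w \<in> double_coset G H (g w)}"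
  proof (rule conj_action.card_dvd_carrier_if_saturated)
    fix \<phi> \<psi>
    assume \<phi>: "\<phi> \<in> {\<phi> \<in> homs F G. \<forall>w\<in>W. \<phi> w \<in> double_coset G H (g w)}"
      and \<psi>: "\<psi> \<in> homs F G" and orbit: "profile \<psi> \<in> conj_action.profile_orbit \<phi>"
    obtain h where h: "h \<in> H" and same: "profile \<psi> = profile (conj_hom h \<phi>)"
      using orbit by (auto simp: conj_action.profile_orbit_def)
    show "\<psi> \<in> {\<phi> \<in> homs F G. \<forall>w\<in>W. \<phi> w \<in> double_coset G H (g w)}"
      using double_coset_mem_if_profile_conj[OF _ \<psi> h same] \<phi> \<psi> W g by blast
  qed auto
  then show ?thesis by simp
qed

end

theorem mainTheorem3:
  fixes G :: "('g, 'c) monoid_scheme" and F :: "('f, 'd) monoid_scheme"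
    and H :: "'g set" and W :: "'f set" and g :: "'f \<Rightarrow> 'g"
  assumes "group G" and "subgroup H G"
    and "group F" and "finitely_generated_group F"
    and "infinite (rcosets\<^bsub>F\<^esub> (derived F (carrier F)))"
    and "W \<subseteq> carrier F" and "g \<in> W \<rightarrow> carrier G"
  shows "card_dvd H {\<phi> \<in> homs F G. \<forall>w\<in>W. \<phi> w \<in> double_coset G H (g w)}"
proof -
  obtain deg t where "deg \<in> hom F integer_group" "t \<in> carrier F" "deg t = 1"
    using group.hom_onto_integer_group_if_infinite_abelianization[OF assms(3,4,5)] by blast
  then interpret int_split_homs F deg t G H
    by (intro int_split_homs.intro int_split.intro int_split_axioms.intro int_split_homs_axioms.intro assms(1-3))
  show ?thesis using card_dvd_homs_double_coset[OF assms(6,7)] .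
qed

end
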